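(* Let $\mathcal{B}=\langle V,F,E\rangle$ be a self-contained finite bipartite graph. Then the output of Algorithm 1 applied to $\mathcal{B}$ with no exogenous vertices ($W=\emptyset$) is unique, i.e. all runs of the algorithm (for all possible choices of minimal self-contained sets) produce the same directed cluster graph.
   Context: $\mathrm{adj}_{\mathcal{B}}(X)$ is the set of vertices adjacent to some vertex of $X$. A set $F'\subseteq F$ is self-contained if $|F'|=|\mathrm{adj}_{\mathcal{B}}(F')|$ and $|F''|\le|\mathrm{adj}_{\mathcal{B}}(F'')|$ for all $F''\subseteq F'$; $\mathcal{B}$ is self-contained if $|F|=|V|$ and $F$ is self-contained; a non-empty self-contained set is minimal self-contained if no non-empty strict subset is self-contained. A directed cluster graph is a pair $\langle\mathcal{V},\mathcal{E}\rangle$ with $\mathcal{V}$ a partition of a vertex set and $\mathcal{E}$ a set of edges $x\to C$ from vertices to clusters. Algorithm 1 (here with $W=\emptyset$): initialize $\mathcal{E}=\emptyset$, $\mathcal{V}=\emptyset$, $\mathcal{B}'=\langle V',F',E'\rangle=\mathcal{B}$. While $\mathcal{B}'$ is not the null graph: choose a minimal self-contained set $S_F\subseteq F'$ of $\mathcal{B}'$; let $C=S_F\cup\mathrm{adj}_{\mathcal{B}'}(S_F)$; add $C$ to $\mathcal{V}$; for each $v\in\mathrm{adj}_{\mathcal{B}}(S_F)\setminus\mathrm{adj}_{\mathcal{B}'}(S_F)$ add $v\to C$ to $\mathcal{E}$; replace $\mathcal{B}'$ by its subgraph induced by $(V'\cup F')\setminus C$. Output $\langle\mathcal{V},\mathcal{E}\rangle$.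 *)

theory Defs
  imports Main
begin

definition bipartite_graph :: "'a set \<Rightarrow> 'a set \<Rightarrow> ('a \<times> 'a) set \<Rightarrow> bool" where
  "bipartite_graph V F E \<longleftrightarrow> finite V \<and> finite F \<and> V \<inter> F = {} \<and> E \<subseteq> V \<times> F"

definition adj :: "('a \<times> 'a) set \<Rightarrow> 'a set \<Rightarrow> 'a set \<Rightarrow> 'a set" where
  "adj E Vs X = {v \<in> Vs. \<exists>f\<in>X. (v, f) \<in> E}"

definition self_contained_set :: "('a \<times> 'a) set \<Rightarrow> 'a set \<Rightarrow> 'a set \<Rightarrow> 'a set \<Rightarrow> bool" where
  "self_contained_set E Vs Fs S \<longleftrightarrow>
     S \<subseteq> Fs \<and> card S = card (adj E Vs S) \<and>
     (\<forall>S''. S'' \<subseteq> S \<longrightarrow> card S'' \<le> card (adj E Vs S''))"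

definition self_contained_graph :: "'a set \<Rightarrow> 'a set \<Rightarrow> ('a \<times> 'a) set \<Rightarrow> bool" where
  "self_contained_graph V F E \<longleftrightarrow> card F = card V \<and> self_contained_set E V F F"

definition minimal_self_contained :: "('a \<times> 'a) set \<Rightarrow> 'a set \<Rightarrow> 'a set \<Rightarrow> 'a set \<Rightarrow> bool" where
  "minimal_self_contained E Vs Fs S \<longleftrightarrow>
     S \<noteq> {} \<and> self_contained_set E Vs Fs S \<and>
     (\<forall>S'. S' \<subset> S \<and> S' \<noteq> {} \<longrightarrow> \<not> self_contained_set E Vs Fs S')"

text \<open>A state is \<open>(V', F', \<V>, \<E>)\<close>: the current subgraph \<open>\<B>'\<close> is the subgraph of \<open>\<B>\<close>
  induced by \<open>V' \<union> F'\<close> (its edges are \<open>E \<inter> V' \<times> F'\<close>), and \<open>(\<V>, \<E>)\<close> is the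
  directed cluster graph built so far.  \<open>alg1_run V F E st out\<close> means that some
  run of the algorithm from state st terminates with output out.\<close>
inductive alg1_run :: "'a set \<Rightarrow> 'a set \<Rightarrow> ('a \<times> 'a) set \<Rightarrow>
    'a set \<times> 'a set \<times> 'a set set \<times> ('a \<times> 'a set) set \<Rightarrow>
    'a set set \<times> ('a \<times> 'a set) set \<Rightarrow> bool"
  for V F :: "'a set" and E :: "('a \<times> 'a) set" where
  finish: "V' \<union> F' = {} \<Longrightarrow> alg1_run V F E (V', F', Cs, Es) (Cs, Es)"
| step: "V' \<union> F' \<noteq> {} \<Longrightarrow>
         minimal_self_contained (E \<inter> V' \<times> F') V' F' S \<Longrightarrow>
         C = S \<union> adj (E \<inter> V' \<times> F') V' S \<Longrightarrow>
         alg1_run V F E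
           (V' - C, F' - C, insert C Cs,
            Es \<union> {(v, C) | v. v \<in> adj E V S - adj (E \<inter> V' \<times> F') V' S}) out \<Longrightarrow>
         alg1_run V F E (V', F', Cs, Es) out"

end

(* By Hall's condition and inclusion-exclusion, the sets S with |S| = |adj S| are closed under
   intersection, with adj (A \<inter> B) = adj A \<inter> adj B. Hence two distinct minimal self-contained
   sets are disjoint with disjoint neighbourhoods, and removing the cluster of one leaves the other
   minimal self-contained with the same neighbourhood. So two different steps of Algorithm 1 can be
   performed in either order with the same result: the step relation is strongly confluent, and
   since the terminal states admit no step, all runs end in the same output. *)

theory Submission
  imports Defs "HOL-Library.Confluence"
begin

lemma adj_Int_Times: "X \<subseteq> Fs \<Longrightarrow> adj (E \<inter> Vs \<times> Fs) Vs X = adj E Vs X"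
  by (auto simp: adj_def)

lemma adj_Un: "adj E Vs (A \<union> B) = adj E Vs A \<union> adj E Vs B"
  by (auto simp: adj_def)

lemma adj_subset: "adj E Vs X \<subseteq> Vs"
  by (auto simp: adj_def)

lemma adj_mono: "A \<subseteq> B \<Longrightarrow> adj E Vs A \<subseteq> adj E Vs B"
  by (auto simp: adj_def)

lemma adj_Diff: "adj E (Vs - C) X = adj E Vs X - C"
  by (auto simp: adj_def)

lemma adj_empty [simp]: "adj E Vs {} = {}"
  by (auto simp: adj_def)

lemma finite_adj: "finite Vs \<Longrightarrow> finite (adj E Vs X)"
  using adj_subset finite_subset by metis

lemma self_contained_set_Int_Times:
  "self_contained_set (E \<inter> Vs \<times> Fs) Vs Fs S \<longleftrightarrow> self_contained_set E Vs Fs S"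
  unfolding self_contained_set_def by (metis adj_Int_Times order_trans)

lemma minimal_self_contained_Int_Times:
  "minimal_self_contained (E \<inter> Vs \<times> Fs) Vs Fs S \<longleftrightarrow> minimal_self_contained E Vs Fs S"
  by (simp add: minimal_self_contained_def self_contained_set_Int_Times)

locale self_contained_bipartite =
  fixes V F :: "'a set" and E :: "('a \<times> 'a) set"
  assumes finite_V: "finite V" and finite_F: "finite F" and disjoint: "V \<inter> F = {}"
    and self_contained_F: "self_contained_set E V F F"
begin

lemma hall: "T \<subseteq> F \<Longrightarrow> card T \<le> card (adj E V T)"
  using self_contained_F by (simp add: self_contained_set_def)

lemma self_contained_set_iff:
  "self_contained_set E V F S \<longleftrightarrow> S \<subseteq> F \<and> card S = card (adj E V S)"
  using hall by (auto simp: self_contained_set_def)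

lemma self_contained_set_Int:
  assumes A: "self_contained_set E V F A" and B: "self_contained_set E V F B"
  shows "self_contained_set E V F (A \<inter> B)"
    and "adj E V (A \<inter> B) = adj E V A \<inter> adj E V B"
proof -
  have AF: "A \<subseteq> F" and BF: "B \<subseteq> F"
    and cardA: "card A = card (adj E V A)" and cardB: "card B = card (adj E V B)"
    using A B by (simp_all add: self_contained_set_iff)
  have "finite A" "finite B"
    using AF BF finite_F finite_subset by blast+
  moreover have "finite (adj E V A)" "finite (adj E V B)"
    using finite_V by (simp_all add: finite_adj)
  moreover have "card (A \<union> B) \<le> card (adj E V A \<union> adj E V B)"
    using hall[of "A \<union> B"] AF BF by (simp add: adj_Un)
  ultimately have lower: "card (adj E V A \<inter> adj E V B) \<le> card (A \<inter> B)"
    using cardA cardB card_Un_Int[of A B] card_Un_Int[of "adj E V A" "adj E V B"] by linarith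
  have middle: "card (A \<inter> B) \<le> card (adj E V (A \<inter> B))"
    using hall AF by blast
  have sub: "adj E V (A \<inter> B) \<subseteq> adj E V A \<inter> adj E V B"
    by (simp add: adj_mono)
  show eq: "adj E V (A \<inter> B) = adj E V A \<inter> adj E V B"
    using card_seteq[OF _ sub] lower middle finite_V by (simp add: finite_adj)
  show "self_contained_set E V F (A \<inter> B)"
    unfolding self_contained_set_iff using AF lower middle eq by auto
qed

lemma minimal_self_contained_disjoint:
  assumes A: "minimal_self_contained E V F A" and B: "minimal_self_contained E V F B"
    and "A \<noteq> B"
  shows "A \<inter> B = {}" and "adj E V A \<inter> adj E V B = {}"
proof -
  have scA: "self_contained_set E V F A" and scB: "self_contained_set E V F B"
    using A B by (simp_all add: minimal_self_contained_def)
  show "A \<inter> B = {}"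
  proof (rule ccontr)
    assume "A \<inter> B \<noteq> {}"
    moreover have "self_contained_set E V F (A \<inter> B)"
      using self_contained_set_Int(1)[OF scA scB] .
    ultimately have "\<not> A \<inter> B \<subset> A" and "\<not> A \<inter> B \<subset> B"
      using A B by (auto simp: minimal_self_contained_def)
    then show False
      using \<open>A \<noteq> B\<close> by blast
  qed
  then show "adj E V A \<inter> adj E V B = {}"
    using self_contained_set_Int(2)[OF scA scB] by simp
qed

lemma adj_remove:
  assumes "S \<subseteq> F"
  shows "adj E (V - (S \<union> adj E V S)) X = adj E V X - adj E V S"
  using assms disjoint adj_subset[of E V X] by (auto simp: adj_Diff)

lemma remove_self_contained:
  assumes S: "self_contained_set E V F S"
  defines "C \<equiv> S \<union> adj E V S"
  shows "self_contained_bipartite (V - C) (F - C) E"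
proof
  have SF: "S \<subseteq> F" and cardS: "card S = card (adj E V S)"
    using S by (simp_all add: self_contained_set_iff)
  have FC: "F - C = F - S"
    using SF disjoint adj_subset[of E V S] by (auto simp: C_def)
  have adjC: "adj E (V - C) T = adj E V T - adj E V S" for T
    unfolding C_def using adj_remove[OF SF] .
  have hall_C: "card T \<le> card (adj E (V - C) T)" if T: "T \<subseteq> F - C" for T
  proof -
    have "finite T" "finite S"
      using T SF finite_F finite_subset by blast+
    moreover have "T \<inter> S = {}"
      using T FC by blast
    ultimately have "card T + card S = card (T \<union> S)"
      by (simp add: card_Un_disjoint)
    also have "\<dots> \<le> card (adj E V (T \<union> S))"
      using hall T SF by blast
    also have "adj E V (T \<union> S) = (adj E V T - adj E V S) \<union> adj E V S"
      by (auto simp: adj_Un)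
    also have "card \<dots> = card (adj E (V - C) T) + card S"
      using card_Un_disjoint[of "adj E V T - adj E V S" "adj E V S"] finite_V cardS
      by (simp add: finite_adj adjC Int_commute)
    finally show ?thesis by simp
  qed
  have "card (adj E (V - C) (F - C)) \<le> card (adj E V F - adj E V S)"
    using finite_V adj_mono[of "F - C" F] by (auto simp: adjC finite_adj intro!: card_mono)
  also have "\<dots> = card F - card S"
    using finite_V cardS self_contained_F adj_mono[OF SF]
    by (simp add: card_Diff_subset finite_adj self_contained_set_def)
  also have "\<dots> = card (F - C)"
    using SF finite_F by (simp add: FC card_Diff_subset finite_subset)
  finally show "self_contained_set E (V - C) (F - C) (F - C)"
    using hall_C by (simp add: self_contained_set_def le_antisym)
qed (use finite_V finite_F disjoint in auto)

lemma adj_remove_other: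
  assumes S: "minimal_self_contained E V F S" and T: "minimal_self_contained E V F T"
    and "S \<noteq> T" and "X \<subseteq> T"
  shows "adj E (V - (S \<union> adj E V S)) X = adj E V X"
proof -
  have "S \<subseteq> F"
    using S by (simp add: minimal_self_contained_def self_contained_set_def)
  then show ?thesis
    using adj_remove minimal_self_contained_disjoint(2)[OF S T \<open>S \<noteq> T\<close>]
      adj_mono[OF \<open>X \<subseteq> T\<close>, of E V] by blast
qed

lemma minimal_self_contained_remove:
  assumes S: "minimal_self_contained E V F S" and T: "minimal_self_contained E V F T"
    and "S \<noteq> T"
  defines "C \<equiv> S \<union> adj E V S"
  shows "minimal_self_contained E (V - C) (F - C) T"
proof -
  interpret rest: self_contained_bipartite "V - C" "F - C" E
    using S by (simp add: C_def minimal_self_contained_def remove_self_contained)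
  have TF: "T \<subseteq> F"
    using T by (simp add: minimal_self_contained_def self_contained_set_def)
  have "T \<subseteq> F - C"
    using minimal_self_contained_disjoint(1)[OF S T \<open>S \<noteq> T\<close>] TF disjoint adj_subset[of E V S]
    by (auto simp: C_def)
  moreover have "adj E (V - C) X = adj E V X" if "X \<subseteq> T" for X
    unfolding C_def using adj_remove_other[OF S T \<open>S \<noteq> T\<close> that] .
  ultimately have "self_contained_set E (V - C) (F - C) X \<longleftrightarrow> self_contained_set E V F X"
    if "X \<subseteq> T" for X
    using that TF by (auto simp: rest.self_contained_set_iff self_contained_set_iff)
  then show ?thesis
    using T unfolding minimal_self_contained_def by (meson order.refl psubset_imp_subset)
qed

end

(* Unlike alg1_run, a step reads adjacency in the unrestricted E (harmless by
   minimal_self_contained_Int_Times) and fires only where the remaining graph is self-contained,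
   the invariant that makes distinct steps commute. *)
inductive alg1_step :: "'a set \<Rightarrow> ('a \<times> 'a) set \<Rightarrow>
    'a set \<times> 'a set \<times> 'a set set \<times> ('a \<times> 'a set) set \<Rightarrow>
    'a set \<times> 'a set \<times> 'a set set \<times> ('a \<times> 'a set) set \<Rightarrow> bool"
  for V :: "'a set" and E :: "('a \<times> 'a) set" where
  "self_contained_bipartite V' F' E \<Longrightarrow> minimal_self_contained E V' F' S \<Longrightarrow>
   C = S \<union> adj E V' S \<Longrightarrow>
   alg1_step V E (V', F', Cs, Es)
     (V' - C, F' - C, insert C Cs, Es \<union> {(v, C) | v. v \<in> adj E V S - adj E V' S})"

lemma alg1_run_imp_alg1_steps:
  assumes "alg1_run V F E (V', F', Cs, Es) out" and "self_contained_bipartite V' F' E"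
  shows "(alg1_step V E)\<^sup>*\<^sup>* (V', F', Cs, Es) ({}, {}, out)"
  using assms
proof (induction "(V', F', Cs, Es)" out arbitrary: V' F' Cs Es rule: alg1_run.induct)
  case (finish V' F' Cs Es)
  then show ?case by simp
next
  case (step V' F' S C Cs Es out)
  have "S \<subseteq> F'"
    using step.hyps(2) by (simp add: minimal_self_contained_def self_contained_set_def)
  then have C: "C = S \<union> adj E V' S"
    using step.hyps(3) by (simp add: adj_Int_Times)
  have S: "minimal_self_contained E V' F' S"
    using step.hyps(2) by (simp add: minimal_self_contained_Int_Times)
  have "self_contained_bipartite (V' - C) (F' - C) E"
    unfolding C using S step.prems
    by (simp add: minimal_self_contained_def self_contained_bipartite.remove_self_contained)
  then have "(alg1_step V E)\<^sup>*\<^sup>* (V' - C, F' - C, insert C Cs,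
      Es \<union> {(v, C) | v. v \<in> adj E V S - adj E V' S}) ({}, {}, out)"
    using step.hyps(5) \<open>S \<subseteq> F'\<close> by (simp add: adj_Int_Times)
  then show ?case
    using alg1_step.intros[OF step.prems S C] by (rule converse_rtranclp_into_rtranclp[rotated])
qed

lemma alg1_step_after_other:
  assumes G: "self_contained_bipartite V' F' E"
    and S: "minimal_self_contained E V' F' S" and T: "minimal_self_contained E V' F' T"
    and "S \<noteq> T"
  defines "C \<equiv> S \<union> adj E V' S" and "D \<equiv> T \<union> adj E V' T"
  shows "alg1_step V E
     (V' - C, F' - C, insert C Cs, Es \<union> {(v, C) | v. v \<in> adj E V S - adj E V' S})
     (V' - C - D, F' - C - D, insert D (insert C Cs),
      Es \<union> {(v, C) | v. v \<in> adj E V S - adj E V' S} \<union> {(v, D) | v. v \<in> adj E V T - adj E V' T})"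
proof -
  interpret self_contained_bipartite V' F' E
    by (fact G)
  have adj_T: "adj E (V' - C) T = adj E V' T"
    unfolding C_def using adj_remove_other[OF S T \<open>S \<noteq> T\<close>] by blast
  have "self_contained_bipartite (V' - C) (F' - C) E"
    using S by (simp add: C_def minimal_self_contained_def remove_self_contained)
  moreover have "minimal_self_contained E (V' - C) (F' - C) T"
    unfolding C_def using minimal_self_contained_remove[OF S T \<open>S \<noteq> T\<close>] .
  moreover have "D = T \<union> adj E (V' - C) T"
    by (simp add: D_def adj_T)
  ultimately show ?thesis
    using alg1_step.intros[of "V' - C" "F' - C" E T D V] by (simp add: adj_T)
qed

lemma alg1_step_strong_confluent: "strong_confluentp (alg1_step V E)"
proof
  fix x y z
  assume "alg1_step V E x y" and "alg1_step V E x z"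
  then obtain V' F' Cs Es S T where
    G: "self_contained_bipartite V' F' E"
    and S: "minimal_self_contained E V' F' S" and T: "minimal_self_contained E V' F' T"
    and y: "y = (V' - (S \<union> adj E V' S), F' - (S \<union> adj E V' S), insert (S \<union> adj E V' S) Cs,
      Es \<union> {(v, S \<union> adj E V' S) | v. v \<in> adj E V S - adj E V' S})"
    and z: "z = (V' - (T \<union> adj E V' T), F' - (T \<union> adj E V' T), insert (T \<union> adj E V' T) Cs,
      Es \<union> {(v, T \<union> adj E V' T) | v. v \<in> adj E V T - adj E V' T})"
    by (elim alg1_step.cases) auto
  show "\<exists>u. (alg1_step V E)\<^sup>*\<^sup>* y u \<and> (alg1_step V E)\<^sup>=\<^sup>= z u"
  proof (cases "S = T")
    case True
    then show ?thesis
      using y z by auto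
  next
    case False
    have "\<exists>u. alg1_step V E y u \<and> alg1_step V E z u"
      using alg1_step_after_other[OF G S T False, of V Cs Es]
        alg1_step_after_other[OF G T S False[symmetric], of V Cs Es] y z
      by (simp add: Diff_eq Int_ac insert_commute Un_ac) blast
    then show ?thesis
      by blast
  qed
qed

lemma alg1_steps_from_empty:
  "(alg1_step V E)\<^sup>*\<^sup>* ({}, {}, out) st \<Longrightarrow> st = ({}, {}, out)"
  by (erule converse_rtranclpE)
    (auto elim!: alg1_step.cases simp: minimal_self_contained_def self_contained_set_def)

theorem lemma34:
  fixes V F :: "'a set" and E :: "('a \<times> 'a) set"
  assumes "bipartite_graph V F E"
    and "self_contained_graph V F E"
    and "alg1_run V F E (V, F, {}, {}) out1"
    and "alg1_run V F E (V, F, {}, {}) out2"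
  shows "out1 = out2"
proof -
  have "self_contained_bipartite V F E"
    using assms(1,2) by unfold_locales (auto simp: bipartite_graph_def self_contained_graph_def)
  then have "(alg1_step V E)\<^sup>*\<^sup>* (V, F, {}, {}) ({}, {}, out1)"
    and "(alg1_step V E)\<^sup>*\<^sup>* (V, F, {}, {}) ({}, {}, out2)"
    using assms(3,4) by (simp_all add: alg1_run_imp_alg1_steps)
  then obtain u where "(alg1_step V E)\<^sup>*\<^sup>* ({}, {}, out1) u"
    and "(alg1_step V E)\<^sup>*\<^sup>* ({}, {}, out2) u"
    using confluentpD[OF strong_confluentp_imp_confluentp[OF alg1_step_strong_confluent]] by blast
  then show ?thesis
    by (auto dest: alg1_steps_from_empty)
qed

end
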